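(* Let $\epsilon>0$, let $\Delta\mathbf{X}\subset\mathbb{R}^2$ be a $\delta$-location set (finite set of cell coordinates), and let $\mathbf{x}^*\in\Delta\mathbf{X}$. The Planar Isotropic Mechanism (Algorithm 2) with input $(\epsilon,\Delta\mathbf{X},\mathbf{x}^* )$ is $\epsilon$-differentially private on $\Delta\mathbf{X}$: for every output $\mathbf{z}$ and every $\mathbf{x}_1,\mathbf{x}_2\in\Delta\mathbf{X}$, $\Pr(\mathcal{A}(\mathbf{x}_1)=\mathbf{z})\le e^{\epsilon}\Pr(\mathcal{A}(\mathbf{x}_2)=\mathbf{z})$, where $\mathcal{A}(\mathbf{x})$ denotes the output of the mechanism with true location $\mathbf{x}$.
   Context: Planar Isotropic Mechanism with input $(\epsilon,\Delta\mathbf{X},\mathbf{x}^* )$: (1) $K'=\mathrm{Conv}(\Delta\mathbf{X})$ with vertices $\mathbf{v}_1,\dots,\mathbf{v}_h$; (2) $K=\mathrm{Conv}\{\mathbf{v}_i-\mathbf{v}_j:1\le i,j\le h\}$ (the sensitivity hull); (3) sample $\mathbf{y}_1,\dots,\mathbf{y}_l$ independently uniformly from $K$ and set $\mathbf{T}=\big(\frac1l\sum_{i=1}^l\mathbf{y}_i\mathbf{y}_i^T\big)^{-1/2}$ (repeating with larger $l$ until $\mathbf{T}$ is stable); (4) let $K_I=\mathbf{T}K$, sample $\mathbf{z}'$ uniformly from $K_I$ and $r$ from the Gamma distribution with shape $3$ and scale $\epsilon^{-1}$; (5) output $\mathbf{z}=\mathbf{x}^*+r\mathbf{T}^{-1}\mathbf{z}'$.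 $\mathrm{Conv}$ denotes convex hull. A $\delta$-location set is a set of map cells of minimum cardinality whose prior probabilities sum to at least $1-\delta$. *)

theory Defs
  imports "HOL-Probability.Probability"
begin

definition delta_location_set ::
    "(real^2) set \<Rightarrow> (real^2 \<Rightarrow> real) \<Rightarrow> real \<Rightarrow> (real^2) set \<Rightarrow> bool" where
  "delta_location_set cells prior \<delta> DX \<longleftrightarrow>
     DX \<subseteq> cells \<and> (\<Sum>c\<in>DX. prior c) \<ge> 1 - \<delta> \<and>
     (\<forall>S. S \<subseteq> cells \<and> (\<Sum>c\<in>S. prior c) \<ge> 1 - \<delta> \<longrightarrow> card DX \<le> card S)"

definition hull_vertices :: "(real^2) set \<Rightarrow> (real^2) set" where
  "hull_vertices DX = {v. v extreme_point_of (convex hull DX)}"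

definition sensitivity_hull :: "(real^2) set \<Rightarrow> (real^2) set" where
  "sensitivity_hull DX =
     convex hull {v - w | v w. v \<in> hull_vertices DX \<and> w \<in> hull_vertices DX}"

text \<open>Steps (4)-(5): given the (invertible) isotropic transformation T,
  z' is uniform on K_I = T K, r ~ Gamma(shape 3, scale 1/eps) (= Erlang with
  k = 2 and rate eps), and the output is z = x + r T^{-1} z'.\<close>
definition PIM :: "real \<Rightarrow> (real^2) set \<Rightarrow> real^2^2 \<Rightarrow> real^2 \<Rightarrow> (real^2) measure" where
  "PIM \<epsilon> DX T x =
     distr (uniform_measure lborel ((\<lambda>v. T *v v) ` sensitivity_hull DX)
              \<Otimes>\<^sub>M density lborel (\<lambda>r. ennreal (erlang_density 2 \<epsilon> r)))
           borel
           (\<lambda>(z', r). x + r *\<^sub>R (matrix_inv T *v z'))"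

end

theory Submission
  imports Defs
begin

text \<open>Conditioned on the radius r, the point z' is uniform on T K, and the Jacobian r^2 of
  z' \<mapsto> x + r T^-1 z' cancels the factor r^2 of the Gamma(3) density; so the output density at z
  is a constant multiple of the integral of exp (-\<epsilon> r) [(z - x) / r \<in> K] over r > 0.
  Every difference x1 - x2 of points of \<Delta>X lies in the convex sensitivity hull K, hence
  (z - x1) / s \<in> K implies that (z - x2) / (s + 1), a convex combination of (z - x1) / s and
  x1 - x2, lies in K. The substitution r = s + 1 thus bounds the density at x1 by exp \<epsilon>
  times the density at x2.\<close>

lemma diff_mem_convex_hull_differences:
  fixes S :: "'a::real_vector set"
  assumes "x \<in> convex hull S" "y \<in> convex hull S"
  shows "x - y \<in> convex hull {v - w | v w. v \<in> S \<and> w \<in> S}"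
proof -
  have "- y \<in> convex hull (uminus ` S)"
    using assms(2) convex_hull_linear_image[OF linear_uminus, of S] by auto
  then have "x + - y \<in> convex hull (S + uminus ` S)"
    unfolding convex_hull_set_plus by (rule set_plus_intro[OF assms(1)])
  moreover have "S + uminus ` S = {v - w | v w. v \<in> S \<and> w \<in> S}"
    by (force simp: set_plus_def)
  ultimately show ?thesis by simp
qed

lemma sensitivity_hull_diff_mem:
  assumes "finite DX" "x1 \<in> DX" "x2 \<in> DX"
  shows "x1 - x2 \<in> sensitivity_hull DX"
proof -
  have "convex hull DX = convex hull hull_vertices DX"
    unfolding hull_vertices_def using assms(1)
    by (intro Krein_Milman_Minkowski finite_imp_compact_convex_hull convex_convex_hull)
  then show ?thesis
    using assms(2,3) hull_subset[of DX convex]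
    by (auto simp: sensitivity_hull_def intro!: diff_mem_convex_hull_differences)
qed

lemma compact_sensitivity_hull:
  assumes "finite DX"
  shows "compact (sensitivity_hull DX)"
proof -
  have "hull_vertices DX \<subseteq> DX"
    by (auto simp: hull_vertices_def intro: extreme_point_of_convex_hull)
  then have "finite (hull_vertices DX)"
    using assms finite_subset by blast
  moreover have "{v - w | v w. v \<in> hull_vertices DX \<and> w \<in> hull_vertices DX}
      = (\<lambda>(v, w). v - w) ` (hull_vertices DX \<times> hull_vertices DX)"
    by auto
  ultimately show ?thesis
    unfolding sensitivity_hull_def by (simp add: finite_imp_compact_convex_hull)
qed

lemma measure_pos_if_interior_nonempty:
  fixes S :: "'a::euclidean_space set"
  assumes "bounded S" "S \<in> sets borel" "interior S \<noteq> {}"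
  shows "measure lborel S > 0"
proof -
  obtain a d where "d > 0" "ball a d \<subseteq> S"
    using assms(3) by (auto simp: mem_interior)
  moreover have "S \<in> fmeasurable lborel"
    using emeasure_bounded_finite[OF assms(1)] assms(2) by (simp add: fmeasurable_def)
  ultimately have "measure lborel (ball a d) \<le> measure lborel S"
    by (intro measure_mono_fmeasurable) auto
  with content_ball_pos[OF \<open>d > 0\<close>, of a] show ?thesis by linarith
qed

lemma measure_sensitivity_hull_pos:
  assumes "finite DX" "interior (sensitivity_hull DX) \<noteq> {}"
  shows "measure lborel (sensitivity_hull DX) > 0"
  using compact_sensitivity_hull[OF assms(1)] assms(2)
  by (intro measure_pos_if_interior_nonempty) (simp_all add: compact_imp_bounded compact_imp_closed)

definition pim_kernel :: "real \<Rightarrow> 'a::euclidean_space set \<Rightarrow> 'a \<Rightarrow> ennreal" where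
  "pim_kernel \<epsilon> K y =
     (\<integral>\<^sup>+ r. ennreal (exp (- \<epsilon> * r)) * indicator {0<..} r * indicator K ((1/r) *\<^sub>R y) \<partial>lborel)"

lemma borel_measurable_pim_kernel[measurable]:
  assumes [measurable]: "K \<in> sets borel"
  shows "pim_kernel \<epsilon> K \<in> borel_measurable borel"
proof -
  have "(\<lambda>(y, r). ennreal (exp (- \<epsilon> * r)) * indicator {0<..} r * indicator K ((1/r) *\<^sub>R y))
          \<in> borel_measurable (borel \<Otimes>\<^sub>M lborel)"
    by measurable
  from lborel.borel_measurable_nn_integral_fst[OF this] show ?thesis
    by (simp add: pim_kernel_def[abs_def])
qed

lemma pim_kernel_le:
  assumes "\<epsilon> > 0"
  shows "pim_kernel \<epsilon> K y \<le> ennreal (1 / \<epsilon>)"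
proof -
  have "pim_kernel \<epsilon> K y \<le> (\<integral>\<^sup>+ r. ennreal (1 / \<epsilon>) * ennreal (exponential_density \<epsilon> r) \<partial>lborel)"
    unfolding pim_kernel_def
    by (intro nn_integral_mono)
       (use assms in \<open>auto simp: exponential_density_def ennreal_mult'[symmetric]
                                     indicator_def mult.commute\<close>)
  also have "\<dots> = ennreal (1 / \<epsilon>)"
    using nn_integral_erlang_ith_moment[OF assms, of 0 0] by (simp add: nn_integral_cmult)
  finally show ?thesis .
qed

lemma pim_kernel_le_exp_translate:
  assumes K: "convex K" "K \<in> sets borel" and "d \<in> K" and "\<epsilon> > 0"
  shows "pim_kernel \<epsilon> K y \<le> ennreal (exp \<epsilon>) * pim_kernel \<epsilon> K (y + d)"
proof -
  define h where
    "h r = ennreal (exp (- \<epsilon> * r)) * indicator {0<..} r * indicator K ((1/r) *\<^sub>R (y + d))" for r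
  have [measurable]: "h \<in> borel_measurable borel"
    unfolding h_def using K(2) by measurable
  have shift: "pim_kernel \<epsilon> K (y + d) = (\<integral>\<^sup>+ s. h (s + 1) \<partial>lborel)"
    using nn_integral_real_affine[of h 1 1] by (simp add: pim_kernel_def h_def add.commute)
  have "pim_kernel \<epsilon> K y \<le> (\<integral>\<^sup>+ s. ennreal (exp \<epsilon>) * h (s + 1) \<partial>lborel)"
    unfolding pim_kernel_def
  proof (intro nn_integral_mono)
    fix s :: real
    show "ennreal (exp (- \<epsilon> * s)) * indicator {0<..} s * indicator K ((1/s) *\<^sub>R y)
        \<le> ennreal (exp \<epsilon>) * h (s + 1)"
    proof (cases "s > 0 \<and> (1/s) *\<^sub>R y \<in> K")
      case True
      then have "(s / (s + 1)) *\<^sub>R ((1/s) *\<^sub>R y) + (1 / (s + 1)) *\<^sub>R d \<in> K"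
        using convexD[OF K(1) _ \<open>d \<in> K\<close>, of "(1/s) *\<^sub>R y" "s/(s+1)" "1/(s+1)"]
        by (simp add: add_divide_distrib[symmetric])
      moreover have "(s / (s + 1)) *\<^sub>R ((1/s) *\<^sub>R y) + (1 / (s + 1)) *\<^sub>R d = (1 / (s + 1)) *\<^sub>R (y + d)"
        using True by (simp add: scaleR_add_right divide_inverse)
      moreover have "ennreal (exp \<epsilon>) * ennreal (exp (- \<epsilon> * (s + 1))) = ennreal (exp (- \<epsilon> * s))"
        by (simp add: ennreal_mult'[symmetric] exp_add[symmetric] algebra_simps)
      ultimately show ?thesis
        using True by (simp add: h_def)
    qed (auto simp: indicator_def)
  qed
  also have "\<dots> = ennreal (exp \<epsilon>) * pim_kernel \<epsilon> K (y + d)"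
    by (simp add: shift nn_integral_cmult)
  finally show ?thesis .
qed

lemma borel_measurable_matrix_vector_mult[measurable]:
  "(\<lambda>v. (M::real^'n^'m) *v v) \<in> borel_measurable borel"
  by (intro borel_measurable_continuous_onI continuous_intros)

lemma matrix_inv_left:
  fixes T :: "'a::semiring_1^'n^'n"
  assumes "invertible T"
  shows "matrix_inv T ** T = mat 1"
  using someI_ex[OF assms[unfolded invertible_def]] by (simp add: matrix_inv_def)

lemma abs_det_matrix_inv:
  fixes T :: "real^'n^'n"
  assumes "invertible T"
  shows "\<bar>det (matrix_inv T)\<bar> = 1 / \<bar>det T\<bar>"
proof -
  have "det (matrix_inv T) * det T = 1"
    using arg_cong[OF matrix_inv_left[OF assms], of det] by (simp add: det_mul)
  then show ?thesis
    by (metis abs_mult abs_one nonzero_eq_divide_eq zero_neq_one mult_zero_right)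
qed

lemma emeasure_lborel_bounded:
  fixes X :: "'a::euclidean_space set"
  assumes "bounded X" "X \<in> sets borel"
  shows "emeasure lborel X = ennreal (measure lborel X)"
  using emeasure_bounded_finite[OF assms(1)] assms(2) by (simp add: emeasure_eq_ennreal_measure)

lemma measure_lborel_matrix_image:
  fixes K :: "(real^'n::{finite,wellorder}) set"
  assumes "compact K"
  shows "measure lborel ((\<lambda>v. T *v v) ` K) = \<bar>det T\<bar> * measure lborel K"
proof -
  have "measure lebesgue ((\<lambda>v. T *v v) ` K) = \<bar>det (matrix ((*v) T))\<bar> * measure lebesgue K"
    by (rule measure_linear_image) (auto intro: matrix_vector_mul_linear lmeasurable_compact assms)
  moreover have "compact ((\<lambda>v. T *v v) ` K)"
    by (intro compact_continuous_image assms continuous_intros)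
  ultimately show ?thesis
    using assms by (simp add: matrix_of_matrix_vector_mul compact_imp_closed)
qed

lemma emeasure_matrix_image_slice:
  fixes K :: "(real^'n::{finite,wellorder}) set"
  assumes K: "compact K" and T: "invertible T" and r: "r > 0" and A[measurable]: "A \<in> sets borel"
  shows "emeasure lborel ((\<lambda>v. T *v v) ` K \<inter> {z'. x + r *\<^sub>R (matrix_inv T *v z') \<in> A})
     = ennreal (\<bar>det T\<bar> / r ^ CARD('n)) * emeasure lborel {z. (1/r) *\<^sub>R (z - x) \<in> K \<and> z \<in> A}"
proof -
  define Ti where "Ti = matrix_inv T"
  have TiT: "Ti *v (T *v k) = k" for k
    using matrix_inv_left[OF T] by (simp add: Ti_def matrix_vector_mul_assoc)
  have [measurable]: "K \<in> sets borel"
    using K by (simp add: compact_imp_closed)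
  define B where "B = (\<lambda>v. T *v v) ` K \<inter> {z'. x + r *\<^sub>R (Ti *v z') \<in> A}"
  define C where "C = {z. (1/r) *\<^sub>R (z - x) \<in> K \<and> z \<in> A}"
  define L where "L = (*\<^sub>R) r \<circ> (*v) Ti"
  have "compact ((\<lambda>v. T *v v) ` K)"
    by (intro compact_continuous_image K continuous_intros)
  then have B: "bounded B" "B \<in> sets borel"
    by (auto simp: B_def compact_imp_closed intro: bounded_subset compact_imp_bounded)
  have "compact ((\<lambda>k. x + r *\<^sub>R k) ` K)"
    by (intro compact_continuous_image K continuous_intros)
  moreover have "C \<subseteq> (\<lambda>k. x + r *\<^sub>R k) ` K"
    using r by (auto simp: C_def intro!: image_eqI[where x="(1/r) *\<^sub>R (_ - x)"])
  ultimately have C: "bounded C" "C \<in> sets borel"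
    by (auto simp: C_def intro: bounded_subset compact_imp_bounded)
  have "C = (+) x ` (L ` B)"
  proof safe
    fix z assume "z \<in> C"
    then have "T *v ((1/r) *\<^sub>R (z - x)) \<in> B" and "z = x + L (T *v ((1/r) *\<^sub>R (z - x)))"
      using r by (auto simp: B_def C_def L_def TiT)
    then show "z \<in> (+) x ` L ` B" by blast
  qed (use r TiT in \<open>auto simp: B_def C_def L_def\<close>)
  moreover have "linear L"
    unfolding L_def by (intro linear_compose linear_scaleR matrix_vector_mul_linear)
  ultimately have "measure lborel C = \<bar>det (matrix L)\<bar> * measure lborel B"
    using B C measure_linear_image[of L B] measure_translation[of x "L ` B"]
    by (simp add: bounded_set_imp_lmeasurable)
  moreover have "matrix L = matrix ((*\<^sub>R) r) ** Ti"
    unfolding L_def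
    by (subst matrix_compose)
       (auto intro: matrix_vector_mul_linear linear_scaleR simp: matrix_of_matrix_vector_mul)
  ultimately have "measure lborel B = \<bar>det T\<bar> / r ^ CARD('n) * measure lborel C"
    using r abs_det_matrix_inv[OF T] invertible_det_nz[of T] T
    by (simp add: Ti_def det_mul det_matrix_scaleR abs_mult field_simps)
  then have "emeasure lborel B = ennreal (\<bar>det T\<bar> / r ^ CARD('n) * measure lborel C)"
    using B by (simp add: emeasure_lborel_bounded)
  also have "\<dots> = ennreal (\<bar>det T\<bar> / r ^ CARD('n)) * emeasure lborel C"
    using C r by (simp add: emeasure_lborel_bounded ennreal_mult'[symmetric])
  finally show ?thesis
    by (simp add: B_def C_def Ti_def)
qed

lemma uniform_measure_lborel_pair_density:
  fixes S :: "'a::euclidean_space set" and g :: "'b::euclidean_space \<Rightarrow> ennreal"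
  assumes S: "bounded S" "S \<in> sets borel" "measure lborel S > 0"
    and g: "g \<in> borel_measurable borel" "prob_space (density lborel g)"
  shows "uniform_measure lborel S \<Otimes>\<^sub>M density lborel g
       = density (lborel \<Otimes>\<^sub>M lborel) (\<lambda>(z, r). ennreal (1 / measure lborel S) * indicator S z * g r)"
proof -
  have "uniform_measure lborel S = density lborel (\<lambda>z. ennreal (1 / measure lborel S) * indicator S z)"
    using S divide_ennreal[of 1 "measure lborel S"]
    by (auto simp: uniform_measure_def emeasure_lborel_bounded intro!: density_cong split: split_indicator)
  moreover have "sigma_finite_measure (density lborel (\<lambda>z. ennreal (1 / measure lborel S) * indicator S z))"
    using S by (intro finite_measure.sigma_finite_measure finite_measureI)
               (simp add: emeasure_density nn_integral_cmult_indicator emeasure_lborel_bounded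
                          ennreal_mult'[symmetric])
  ultimately show ?thesis
    using S g
    by (simp add: pair_measure_density prob_space_imp_sigma_finite
                  lborel.sigma_finite_measure_axioms mult.assoc)
qed

lemma nn_integral_pim_slice:
  fixes K :: "(real^2) set" and T :: "real^2^2"
  assumes K: "compact K" "measure lborel K > 0" and T: "invertible T" and "\<epsilon> > 0"
    and A[measurable]: "A \<in> sets borel"
  defines "S \<equiv> (\<lambda>v. T *v v) ` K"
  shows "(\<integral>\<^sup>+ z'. ennreal (1 / measure lborel S) * indicator S z' * ennreal (erlang_density 2 \<epsilon> r)
            * indicator A (x + r *\<^sub>R (matrix_inv T *v z')) \<partial>lborel)
       = (\<integral>\<^sup>+ z. ennreal (\<epsilon>^3 / (2 * measure lborel K) * exp (- \<epsilon> * r)) * indicator {0<..} r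
            * indicator K ((1/r) *\<^sub>R (z - x)) * indicator A z \<partial>lborel)"
proof (cases "r > 0")
  case False
  then have "erlang_density 2 \<epsilon> r = 0"
    by (auto simp: erlang_density_def)
  with False show ?thesis by simp
next
  case r: True
  have "compact S"
    unfolding S_def by (intro compact_continuous_image K(1) continuous_intros)
  then have [measurable]: "K \<in> sets borel" "S \<in> sets borel"
    using K(1) by (auto simp: compact_imp_closed)
  have "measure lborel S = \<bar>det T\<bar> * measure lborel K"
    unfolding S_def using K(1) by (rule measure_lborel_matrix_image)
  moreover have "det T \<noteq> 0"
    using T invertible_det_nz by blast
  moreover have "erlang_density 2 \<epsilon> r = \<epsilon>^3 * r^2 * exp (- \<epsilon> * r) / 2"
    using r by (simp add: erlang_density_def eval_nat_numeral)
  ultimately have const: "erlang_density 2 \<epsilon> r / measure lborel S * (\<bar>det T\<bar> / r^2)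
      = \<epsilon>^3 / (2 * measure lborel K) * exp (- \<epsilon> * r)"
    using r K(2) by (simp add: field_simps power2_eq_square)
  have "(\<integral>\<^sup>+ z'. ennreal (1 / measure lborel S) * indicator S z' * ennreal (erlang_density 2 \<epsilon> r)
            * indicator A (x + r *\<^sub>R (matrix_inv T *v z')) \<partial>lborel)
      = ennreal (erlang_density 2 \<epsilon> r / measure lborel S)
          * emeasure lborel (S \<inter> {z'. x + r *\<^sub>R (matrix_inv T *v z') \<in> A})"
    using \<open>\<epsilon> > 0\<close>
    by (subst nn_integral_cmult_indicator[symmetric], measurable)
       (auto intro!: nn_integral_cong simp: ennreal_mult'[symmetric] split: split_indicator)
  also have "\<dots> = ennreal (erlang_density 2 \<epsilon> r / measure lborel S)
          * (ennreal (\<bar>det T\<bar> / r^2) * emeasure lborel {z. (1/r) *\<^sub>R (z - x) \<in> K \<and> z \<in> A})"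
    by (simp add: S_def emeasure_matrix_image_slice[OF K(1) T r A])
  also have "\<dots> = ennreal (\<epsilon>^3 / (2 * measure lborel K) * exp (- \<epsilon> * r))
          * emeasure lborel {z. (1/r) *\<^sub>R (z - x) \<in> K \<and> z \<in> A}"
    unfolding const[symmetric] by (subst ennreal_mult'') (auto simp: mult.assoc)
  also have "\<dots> = (\<integral>\<^sup>+ z. ennreal (\<epsilon>^3 / (2 * measure lborel K) * exp (- \<epsilon> * r)) * indicator {0<..} r
            * indicator K ((1/r) *\<^sub>R (z - x)) * indicator A z \<partial>lborel)"
    using r
    by (subst nn_integral_cmult_indicator[symmetric], measurable)
       (auto intro!: nn_integral_cong split: split_indicator)
  finally show ?thesis .
qed

lemma PIM_output_density:
  fixes K :: "(real^2) set" and T :: "real^2^2"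
  assumes K: "compact K" "measure lborel K > 0" and T: "invertible T" and \<epsilon>: "\<epsilon> > 0"
  shows "distr (uniform_measure lborel ((\<lambda>v. T *v v) ` K)
                  \<Otimes>\<^sub>M density lborel (\<lambda>r. ennreal (erlang_density 2 \<epsilon> r)))
               borel (\<lambda>(z', r). x + r *\<^sub>R (matrix_inv T *v z'))
       = density lborel (\<lambda>z. ennreal (\<epsilon>^3 / (2 * measure lborel K)) * pim_kernel \<epsilon> K (z - x))"
    (is "distr ?M borel ?\<Phi> = density lborel ?f")
proof (rule measure_eqI)
  fix A assume "A \<in> sets (distr ?M borel ?\<Phi>)"
  then have A[measurable]: "A \<in> sets borel" by simp
  define S where "S = (\<lambda>v. T *v v) ` K"
  define c where "c = \<epsilon>^3 / (2 * measure lborel K)"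
  define G where "G z' r = ennreal (1 / measure lborel S) * indicator S z' * ennreal (erlang_density 2 \<epsilon> r)"
    for z' and r :: real
  define Q where "Q z r = ennreal (c * exp (- \<epsilon> * r)) * indicator {0<..} r
      * indicator K ((1/r) *\<^sub>R (z - x)) * indicator A z" for z and r :: real
  have "compact S"
    unfolding S_def by (intro compact_continuous_image K(1) continuous_intros)
  then have S: "bounded S" "S \<in> sets borel"
    by (auto simp: compact_imp_bounded compact_imp_closed)
  have [measurable]: "K \<in> sets borel"
    using K(1) by (simp add: compact_imp_closed)
  have "measure lborel S > 0"
    using K T invertible_det_nz[of T] by (simp add: S_def measure_lborel_matrix_image)
  then have M: "?M = density (lborel \<Otimes>\<^sub>M lborel) (\<lambda>(z', r). G z' r)"
    using S \<epsilon> prob_space_erlang_density[OF \<epsilon>, of 2]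
    by (simp add: S_def G_def uniform_measure_lborel_pair_density)
  have Gm[measurable]: "(\<lambda>(z', r). G z' r) \<in> borel_measurable (lborel \<Otimes>\<^sub>M lborel)"
    using S(2) unfolding G_def by measurable
  have "emeasure (distr ?M borel ?\<Phi>) A
      = (\<integral>\<^sup>+ (z', r). G z' r * indicator A (?\<Phi> (z', r)) \<partial>(lborel \<Otimes>\<^sub>M lborel))"
  proof -
    have \<Phi>m: "?\<Phi> \<in> measurable (density (lborel \<Otimes>\<^sub>M lborel) (\<lambda>(z', r). G z' r)) borel"
      by (simp add: measurable_cong_sets[OF sets_density refl]) measurable
    show ?thesis
      unfolding M
      by (subst emeasure_distr[OF \<Phi>m A], subst emeasure_density[OF Gm])
         (use measurable_sets[OF \<Phi>m A] in \<open>auto intro!: nn_integral_cong split: split_indicator\<close>)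
  qed
  also have "\<dots> = (\<integral>\<^sup>+ r. \<integral>\<^sup>+ z'. G z' r * indicator A (?\<Phi> (z', r)) \<partial>lborel \<partial>lborel)"
    by (subst lborel_pair.nn_integral_snd[symmetric]) (simp_all add: split_beta')
  also have "\<dots> = (\<integral>\<^sup>+ r. \<integral>\<^sup>+ z. Q z r \<partial>lborel \<partial>lborel)"
    using nn_integral_pim_slice[OF K T \<epsilon> A]
    by (simp add: G_def Q_def S_def c_def mult.assoc)
  also have "\<dots> = (\<integral>\<^sup>+ z. \<integral>\<^sup>+ r. Q z r \<partial>lborel \<partial>lborel)"
    by (rule lborel_pair.Fubini') (simp add: Q_def)
  also have "\<dots> = (\<integral>\<^sup>+ z. ?f z * indicator A z \<partial>lborel)"
  proof (intro nn_integral_cong)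
    fix z
    have "c \<ge> 0"
      using K(2) \<epsilon> by (simp add: c_def)
    then have "Q z r = ennreal c * (ennreal (exp (- \<epsilon> * r)) * indicator {0<..} r
        * indicator K ((1/r) *\<^sub>R (z - x))) * indicator A z" for r
      by (simp add: Q_def ennreal_mult mult.assoc)
    then show "(\<integral>\<^sup>+ r. Q z r \<partial>lborel) = ?f z * indicator A z"
      by (simp add: pim_kernel_def c_def nn_integral_multc nn_integral_cmult)
  qed
  also have "\<dots> = emeasure (density lborel ?f) A"
    by (simp add: emeasure_density)
  finally show "emeasure (distr ?M borel ?\<Phi>) A = emeasure (density lborel ?f) A" .
qed simp

theorem theorem5p3:
  fixes \<epsilon> \<delta> :: real and cells DX :: "(real^2) set" and prior :: "real^2 \<Rightarrow> real"
    and xstar :: "real^2" and T :: "real^2^2"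
  assumes "\<epsilon> > 0"
    and "finite cells"
    and "delta_location_set cells prior \<delta> DX"
    and "xstar \<in> DX"
    and "interior (sensitivity_hull DX) \<noteq> {}"
    and "invertible T"
  shows "\<exists>f :: real^2 \<Rightarrow> real^2 \<Rightarrow> real.
           (\<forall>x\<in>DX. (\<forall>z. f x z \<ge> 0) \<and> f x \<in> borel_measurable borel \<and>
                    PIM \<epsilon> DX T x = density lborel (\<lambda>z. ennreal (f x z))) \<and>
           (\<forall>z. \<forall>x1\<in>DX. \<forall>x2\<in>DX. f x1 z \<le> exp \<epsilon> * f x2 z)"
proof -
  have fin: "finite DX"
    using assms(2,3) by (auto simp: delta_location_set_def intro: finite_subset)
  define K where "K = sensitivity_hull DX"
  have K: "compact K" "convex K" "K \<in> sets borel" "measure lborel K > 0"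
    using compact_sensitivity_hull[OF fin] measure_sensitivity_hull_pos[OF fin assms(5)]
    by (simp_all add: K_def sensitivity_hull_def compact_imp_closed)
  define c where "c = \<epsilon>^3 / (2 * measure lborel K)"
  then have "c \<ge> 0"
    using assms(1) K(4) by simp
  define f where "f x z = c * enn2real (pim_kernel \<epsilon> K (z - x))" for x z
  have f: "ennreal (f x z) = ennreal c * pim_kernel \<epsilon> K (z - x)" for x z
    using pim_kernel_le[OF assms(1), of K "z - x"] \<open>c \<ge> 0\<close>
    by (auto simp: f_def ennreal_mult ennreal_enn2real_if top_unique)
  show ?thesis
  proof (intro exI[of _ f] conjI ballI allI)
    fix x
    show "f x z \<ge> 0" for z
      using \<open>c \<ge> 0\<close> by (simp add: f_def)
    show "f x \<in> borel_measurable borel"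
      using K(3) by (simp add: f_def[abs_def])
    show "PIM \<epsilon> DX T x = density lborel (\<lambda>z. ennreal (f x z))"
      unfolding PIM_def K_def[symmetric] f c_def
      by (rule PIM_output_density[OF K(1,4) assms(6,1)])
  next
    fix z x1 x2 assume "x1 \<in> DX" "x2 \<in> DX"
    then have "pim_kernel \<epsilon> K (z - x1) \<le> ennreal (exp \<epsilon>) * pim_kernel \<epsilon> K (z - x2)"
      using pim_kernel_le_exp_translate[OF K(2,3) _ assms(1), of "x1 - x2" "z - x1"]
      by (simp add: K_def sensitivity_hull_diff_mem[OF fin])
    then have "ennreal (f x1 z) \<le> ennreal (exp \<epsilon>) * ennreal (f x2 z)"
      unfolding f by (metis mult.left_commute mult_left_mono zero_le)
    then show "f x1 z \<le> exp \<epsilon> * f x2 z"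
      using \<open>c \<ge> 0\<close> by (simp add: ennreal_mult'[symmetric] f_def)
  qed
qed

end
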